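(* Let $\mathcal{B}$ be a prime Banach algebra over $\mathbb{R}$ or $\mathbb{C}$, and let $\mathcal{H}_1,\mathcal{H}_2$ be non-empty open subsets of $\mathcal{B}$. Suppose $\mathcal{B}$ admits a continuous automorphism $f$ such that for every $(x,y)\in\mathcal{H}_1\times\mathcal{H}_2$ there exist positive integers $p=p(x,y)$, $q=q(x,y)$ (depending on $x$ and $y$) with $$f(x^{p}y^{q})+x^{p}\circ y^{q}\in Z(\mathcal{B}).$$ Then $\mathcal{B}$ is commutative.
   Context: $Z(\mathcal{B})$ denotes the center of $\mathcal{B}$. For $x,y\in\mathcal{B}$, $x\circ y=xy+yx$ and $[x,y]=xy-yx$. $\mathcal{B}$ is prime if $x\mathcal{B}y=\{0\}$ implies $x=0$ or $y=0$. An automorphism of $\mathcal{B}$ is a bijective map $f:\mathcal{B}\to\mathcal{B}$ with $f(x+y)=f(x)+f(y)$ and $f(xy)=f(x)f(y)$ for all $x,y$. *)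

theory Defs
  imports "HOL-Analysis.Analysis"
begin

text \<open>Positive powers x^n (n >= 1) in a possibly non-unital algebra.
  The value at n = 0 is irrelevant (only used with n > 0).\<close>
fun ppow :: "'a::{times,zero} \<Rightarrow> nat \<Rightarrow> 'a" where
  "ppow x 0 = 0"
| "ppow x (Suc 0) = x"
| "ppow x (Suc (Suc n)) = x * ppow x (Suc n)"

definition center :: "'a::times set" where
  "center = {z. \<forall>x. z * x = x * z}"

definition jordan :: "'a::{times,plus} \<Rightarrow> 'a \<Rightarrow> 'a" where
  "jordan x y = x * y + y * x"

definition prime_alg :: "'a::{times,zero} itself \<Rightarrow> bool" where
  "prime_alg _ \<longleftrightarrow> (\<forall>x y::'a. (\<forall>z. x * z * y = 0) \<longrightarrow> x = 0 \<or> y = 0)"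

definition automorphism :: "('a::{plus,times} \<Rightarrow> 'a) \<Rightarrow> bool" where
  "automorphism f \<longleftrightarrow> bij f \<and> (\<forall>x y. f (x + y) = f x + f y) \<and> (\<forall>x y. f (x * y) = f x * f y)"

end

theory Submission
  imports Defs
begin

text \<open>
  The sets where the identity holds with fixed exponents \<open>p, q\<close> are closed and cover
  \<open>H1 \<times> H2\<close>, so by Baire one of them contains a ball. A continuous additive map is
  \<open>\<real>\<close>-linear, hence the identity is polynomial along every line and, holding on a
  ball, it holds for all \<open>x, y\<close>. Inserting suitable powers, with \<open>E = pq(p + q)\<close> the
  elements \<open>f(u^E) + 2u^E\<close> and \<open>4[u^E, v^E]\<close> are central, which in a prime algebra
  forces all \<open>E\<close>-th powers to commute. If the centre contains some \<open>c \<noteq> 0\<close>,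
  differentiating \<open>(c + t w)^E\<close> at \<open>t = 0\<close> shows that the elements \<open>c^E w\<close> commute,
  and \<open>c^E\<close> can be cancelled. If the centre is zero, then \<open>f(u^E) = -2u^E\<close> gives
  \<open>6 (w^E)^2 = 0\<close>, and a prime algebra of bounded nil index is zero.
\<close>

lemma ppow_Suc: "ppow x (Suc n) = (if n = 0 then x else x * ppow x n)"
  by (cases n) simp_all

lemma ppow_add:
  fixes x :: "'a::{semigroup_mult, zero}"
  assumes "0 < m" "0 < n"
  shows "ppow x m * ppow x n = ppow x (m + n)"
  using assms(1)
proof (induction m)
  case (Suc m)
  then show ?case using assms(2) by (cases "m = 0") (auto simp: ppow_Suc mult.assoc)
qed simp

lemma ppow_mult:
  fixes x :: "'a::{semigroup_mult, zero}"
  assumes "0 < m"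
  shows "ppow (ppow x m) n = ppow x (m * n)"
proof (induction n)
  case (Suc n)
  then show ?case using assms by (auto simp: ppow_Suc ppow_add)
qed simp

lemma continuous_on_ppow [continuous_intros]:
  fixes g :: "'b::topological_space \<Rightarrow> 'a::real_normed_algebra"
  assumes "continuous_on S g"
  shows "continuous_on S (\<lambda>z. ppow (g z) n)"
proof (induction n)
  case (Suc n)
  then show ?case by (cases "n = 0") (auto simp: ppow_Suc assms intro!: continuous_intros)
qed simp

lemma center_iff: "z \<in> center \<longleftrightarrow> (\<forall>x. z * x = x * z)"
  by (simp add: center_def)

lemma center_diff: "a \<in> center \<Longrightarrow> b \<in> center \<Longrightarrow> (a::'a::ring) - b \<in> center"
  unfolding center_iff by (metis left_diff_distrib right_diff_distrib)

lemma center_mult: "a \<in> center \<Longrightarrow> b \<in> center \<Longrightarrow> (a::'a::semigroup_mult) * b \<in> center"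
  unfolding center_iff by (metis mult.assoc)

lemma center_mult_left_commute: "z \<in> center \<Longrightarrow> a * (z * b) = z * (a * (b::'a::semigroup_mult))"
  unfolding center_iff by (metis mult.assoc)

lemma center_scaleR_iff: "r \<noteq> 0 \<Longrightarrow> r *\<^sub>R (a::'a::real_algebra) \<in> center \<longleftrightarrow> a \<in> center"
  by (simp add: center_def)

lemma ppow_center: "c \<in> center \<Longrightarrow> ppow (c::'a::{semigroup_mult, mult_zero}) n \<in> center"
proof (induction n)
  case 0
  then show ?case by (simp add: center_def)
next
  case (Suc n)
  then show ?case by (simp add: ppow_Suc center_mult)
qed

section \<open>Prime algebras\<close>

lemma prime_alg_central_cancel:
  fixes z :: "'a::{semigroup_mult, mult_zero}"
  assumes "prime_alg TYPE('a)" "z \<in> center" "z \<noteq> 0" "z * r = 0"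
  shows "r = 0"
proof -
  have "z * w * r = 0" for w
  proof -
    have "z * w = w * z" using assms(2) by (simp add: center_def)
    then have "z * w * r = w * (z * r)" by (simp add: mult.assoc)
    then show ?thesis using assms(4) by simp
  qed
  then show ?thesis using assms(1,3) unfolding prime_alg_def by blast
qed

lemma ppow_central_nonzero:
  fixes c :: "'a::{semigroup_mult, mult_zero}"
  assumes "prime_alg TYPE('a)" "c \<in> center" "c \<noteq> 0" "0 < n"
  shows "ppow c n \<noteq> 0"
  using assms(4)
proof (induction n)
  case (Suc n)
  then show ?case
    using assms(3) prime_alg_central_cancel[OF assms(1-3), of "ppow c n"] by (auto simp: ppow_Suc)
qed simp

lemma prime_alg_commute_if_commutators_central:
  fixes a b :: "'a::real_algebra"
  assumes prime: "prime_alg TYPE('a)"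
    and central: "a * b - b * a \<in> center" "a * a * b - b * (a * a) \<in> center"
  shows "a * b = b * a"
proof (rule ccontr)
  define c where "c = a * b - b * a"
  assume "a * b \<noteq> b * a"
  then have "c \<noteq> 0" by (simp add: c_def)
  have c_central: "c \<in> center" and c_comm: "\<And>x. c * x = x * c"
    using central(1) by (simp_all add: c_def center_iff)
  have "a * a * b - b * (a * a) = a * (a * b) - (b * a) * a"
    by (simp add: mult.assoc)
  also have "\<dots> = a * (b * a + c) - (a * b - c) * a"
    by (simp add: c_def)
  also have "\<dots> = 2 *\<^sub>R (c * a)"
    by (simp add: algebra_simps scaleR_2 c_comm)
  finally have "c * a \<in> center"
    using central(2) center_scaleR_iff[of 2 "c * a"] by simp
  then have "c * (a * r - r * a) = 0" for r
    by (simp add: center_iff right_diff_distrib) (metis c_comm mult.assoc)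
  then have "a * r = r * a" for r
    using prime_alg_central_cancel[OF prime c_central \<open>c \<noteq> 0\<close>] by fastforce
  then show False
    using \<open>a * b \<noteq> b * a\<close> by blast
qed

section \<open>Derivatives of powers along lines\<close>

fun ppow_deriv :: "'a::semiring_0 \<Rightarrow> 'a \<Rightarrow> nat \<Rightarrow> 'a" where
  "ppow_deriv x y 0 = 0"
| "ppow_deriv x y (Suc 0) = y"
| "ppow_deriv x y (Suc (Suc n)) = y * ppow x (Suc n) + x * ppow_deriv x y (Suc n)"

lemma has_derivative_ppow_line:
  fixes x y :: "'a::real_normed_algebra"
  shows "((\<lambda>t::real. ppow (x + t *\<^sub>R y) n) has_derivative (\<lambda>h. h *\<^sub>R ppow_deriv x y n)) (at 0)"
proof (induction x y n rule: ppow_deriv.induct)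
  case (3 x y n)
  have "((\<lambda>t::real. (x + t *\<^sub>R y) * ppow (x + t *\<^sub>R y) (Suc n)) has_derivative
      (\<lambda>h. (x + 0 *\<^sub>R y) * (h *\<^sub>R ppow_deriv x y (Suc n)) + (h *\<^sub>R y) * ppow (x + 0 *\<^sub>R y) (Suc n))) (at 0)"
    by (rule has_derivative_mult[OF _ 3]) (auto intro!: derivative_eq_intros)
  then show ?case
    by (simp add: algebra_simps)
qed (auto intro!: derivative_eq_intros)

lemma bounded_linear_vanishes_on_derivative:
  fixes g :: "real \<Rightarrow> 'a::real_normed_vector"
  assumes "(g has_derivative (\<lambda>h. h *\<^sub>R v)) (at 0)" "bounded_linear L" "\<And>t. L (g t) = 0"
  shows "L v = 0"
proof -
  have "((\<lambda>t. 0) has_derivative (\<lambda>h. L (h *\<^sub>R v))) (at 0)"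
    using bounded_linear.has_derivative[OF assms(2,1)] assms(3) by simp
  then have "(\<lambda>h. L (h *\<^sub>R v)) = (\<lambda>h. 0)"
    by (rule Deriv.has_derivative_zero_unique)
  then show ?thesis
    by (metis scaleR_one)
qed

lemma ppow_deriv_commute:
  fixes x y b :: "'a::real_normed_algebra"
  assumes "\<And>t::real. ppow (x + t *\<^sub>R y) n * b = b * ppow (x + t *\<^sub>R y) n"
  shows "ppow_deriv x y n * b = b * ppow_deriv x y n"
proof -
  have "bounded_linear (\<lambda>a. a * b - b * a)"
    by (intro bounded_linear_sub bounded_linear_mult_left bounded_linear_mult_right)
  with has_derivative_ppow_line show ?thesis
    by (rule bounded_linear_vanishes_on_derivative[where L = "\<lambda>a. a * b - b * a", simplified])
      (simp add: assms)
qed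

lemma ppow_deriv_zero:
  fixes x y :: "'a::real_normed_algebra"
  assumes "\<And>t::real. ppow (x + t *\<^sub>R y) n = 0"
  shows "ppow_deriv x y n = 0"
  using bounded_linear_vanishes_on_derivative[OF has_derivative_ppow_line bounded_linear_ident, of x y n]
  by (simp add: assms)

lemma ppow_deriv_central:
  fixes c w :: "'a::real_algebra"
  assumes "c \<in> center"
  shows "c * ppow_deriv c w (Suc n) = real (Suc n) *\<^sub>R (ppow c (Suc n) * w)"
proof (induction n)
  case (Suc n)
  have "w * ppow c (Suc n) = ppow c (Suc n) * w"
    using ppow_center[OF assms] center_iff by metis
  then have "c * ppow_deriv c w (Suc (Suc n)) = c * (ppow c (Suc n) * w) + c * (c * ppow_deriv c w (Suc n))"
    by (simp add: distrib_left mult.assoc)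
  also have "\<dots> = ppow c (Suc (Suc n)) * w + real (Suc n) *\<^sub>R (ppow c (Suc (Suc n)) * w)"
    using Suc by (simp add: mult.assoc)
  finally show ?case
    by (simp add: scaleR_add_left scaleR_2)
qed simp

lemma prime_alg_commutative_if_powers_commute:
  fixes c w v :: "'a::real_normed_algebra"
  assumes prime: "prime_alg TYPE('a)" and c: "c \<in> center" "c \<noteq> 0"
    and powers: "\<And>u v::'a. ppow u (Suc m) * ppow v (Suc m) = ppow v (Suc m) * ppow u (Suc m)"
  shows "w * v = v * w"
proof -
  let ?n = "Suc m" and ?cn = "ppow c (Suc m)"
  let ?D = "\<lambda>u. ppow_deriv c u ?n"
  have D_powers: "?D u * ppow v' ?n = ppow v' ?n * ?D u" for u v'
    by (rule ppow_deriv_commute) (rule powers)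
  have D_comm: "?D w * ?D v = ?D v * ?D w"
    by (rule ppow_deriv_commute[symmetric]) (simp add: D_powers)
  have "(c * ?D w) * (c * ?D v) = c * (c * (?D w * ?D v))"
    by (simp add: mult.assoc center_mult_left_commute[OF c(1), of "?D w"])
  also have "\<dots> = (c * ?D v) * (c * ?D w)"
    by (simp add: mult.assoc center_mult_left_commute[OF c(1), of "?D v"] D_comm)
  finally have "(c * ?D w) * (c * ?D v) = (c * ?D v) * (c * ?D w)" .
  then have "(?cn * w) * (?cn * v) = (?cn * v) * (?cn * w)"
    by (simp add: ppow_deriv_central[OF c(1)] del: of_nat_Suc)
  moreover have cn: "?cn \<in> center" "?cn \<noteq> 0"
    using ppow_center[OF c(1)] ppow_central_nonzero[OF prime c] by simp_all
  ultimately have "?cn * (?cn * (w * v - v * w)) = 0"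
    by (simp add: mult.assoc center_mult_left_commute[OF cn(1), of w]
        center_mult_left_commute[OF cn(1), of v] right_diff_distrib)
  then have "w * v - v * w = 0"
    using prime_alg_central_cancel[OF prime cn] by blast
  then show ?thesis
    by simp
qed

lemma prime_alg_nil_trivial:
  fixes x :: "'a::real_normed_algebra"
  assumes prime: "prime_alg TYPE('a)" and nil: "\<And>z::'a. ppow z (Suc n) = 0"
  shows "x = 0"
  using nil
proof (induction n arbitrary: x)
  case (Suc n)
  have "ppow z (Suc n) = 0" for z :: 'a
  proof -
    have "ppow z (Suc n) * y * ppow z (Suc n) = 0" for y
    proof -
      \<comment> \<open>differentiate \<open>(z + t y)^(n+2) = 0\<close> at \<open>t = 0\<close> and multiply by \<open>z^(n+1)\<close> from the left\<close>
      let ?P = "ppow z (Suc n)"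
      have "?P * z = 0"
        using ppow_add[of "Suc n" 1 z] Suc.prems by simp
      then have "?P * y * ?P = ?P * y * ?P + (?P * z) * ppow_deriv z y (Suc n)"
        by simp
      also have "\<dots> = ?P * ppow_deriv z y (Suc (Suc n))"
        by (simp add: distrib_left mult.assoc)
      also have "ppow_deriv z y (Suc (Suc n)) = 0"
        by (rule ppow_deriv_zero) (rule Suc.prems)
      finally show ?thesis
        by simp
    qed
    then show ?thesis
      using prime unfolding prime_alg_def by blast
  qed
  then show ?case
    by (rule Suc.IH)
qed (metis ppow.simps(2))

section \<open>Consequences of the central identity\<close>

definition central_identity :: "('a::semiring_0 \<Rightarrow> 'a) \<Rightarrow> nat \<Rightarrow> nat \<Rightarrow> 'a \<Rightarrow> 'a \<Rightarrow> bool" where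
  "central_identity f p q x y \<longleftrightarrow> f (ppow x p * ppow y q) + jordan (ppow x p) (ppow y q) \<in> center"

lemma central_identity_diagonal:
  fixes f :: "'a::semiring_0 \<Rightarrow> 'a"
  assumes "0 < p" "0 < q" "central_identity f p q (ppow w (p * q)) (ppow w (p * q))"
  shows "f (ppow w (p * q * (p + q))) + (ppow w (p * q * (p + q)) + ppow w (p * q * (p + q))) \<in> center"
proof -
  have "ppow (ppow w (p * q)) p * ppow (ppow w (p * q)) q = ppow w (p * q * (p + q))"
    "ppow (ppow w (p * q)) q * ppow (ppow w (p * q)) p = ppow w (p * q * (p + q))"
    using assms(1,2) by (simp_all add: ppow_mult ppow_add algebra_simps)
  with assms(3) show ?thesis
    by (simp add: central_identity_def jordan_def)
qed

lemma central_identity_powers: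
  fixes f :: "'a::semiring_0 \<Rightarrow> 'a"
  assumes "0 < p" "0 < q" "central_identity f p q (ppow u (q * (p + q))) (ppow v (p * (p + q)))"
  shows "f (ppow u (p * q * (p + q)) * ppow v (p * q * (p + q)))
    + jordan (ppow u (p * q * (p + q))) (ppow v (p * q * (p + q))) \<in> center"
  using assms by (simp add: central_identity_def ppow_mult algebra_simps)

lemma central_identity_powers_commute:
  fixes f :: "'a::real_algebra \<Rightarrow> 'a" and u v :: 'a
  assumes prime: "prime_alg TYPE('a)" and mult: "\<And>x y. f (x * y) = f x * f y"
    and pq: "0 < p" "0 < q" and identity: "\<And>x y. central_identity f p q x y"
  shows "ppow u (p * q * (p + q)) * ppow v (p * q * (p + q))
    = ppow v (p * q * (p + q)) * ppow u (p * q * (p + q))"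
proof -
  let ?E = "p * q * (p + q)"
  have commutator_central: "ppow a ?E * ppow b ?E - ppow b ?E * ppow a ?E \<in> center" for a b :: 'a
  proof -
    let ?A = "ppow a ?E" and ?B = "ppow b ?E"
    define \<alpha> where "\<alpha> = f ?A + (?A + ?A)"
    define \<beta> where "\<beta> = f ?B + (?B + ?B)"
    have \<alpha>: "\<alpha> \<in> center" and \<beta>: "\<beta> \<in> center"
      unfolding \<alpha>_def \<beta>_def using central_identity_diagonal[OF pq identity] by blast+
    have "(f ?A * f ?B + jordan ?A ?B) - (f ?B * f ?A + jordan ?B ?A) \<in> center"
      using central_identity_powers[OF pq identity, of a b] central_identity_powers[OF pq identity, of b a]
      by (intro center_diff) (simp_all add: mult)
    also have "(f ?A * f ?B + jordan ?A ?B) - (f ?B * f ?A + jordan ?B ?A) = 4 *\<^sub>R (?A * ?B - ?B * ?A)"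
    proof -
      \<comment> \<open>writing \<open>f A = \<alpha> - 2A\<close> with \<open>\<alpha>\<close> central, all terms except \<open>4(AB - BA)\<close> cancel\<close>
      have f: "f ?A = \<alpha> - 2 *\<^sub>R ?A" "f ?B = \<beta> - 2 *\<^sub>R ?B"
        by (simp_all add: \<alpha>_def \<beta>_def scaleR_2)
      have "\<alpha> * ?B = ?B * \<alpha>" "\<beta> * ?A = ?A * \<beta>" "\<alpha> * \<beta> = \<beta> * \<alpha>"
        using \<alpha> \<beta> unfolding center_iff by blast+
      then show ?thesis
        unfolding f jordan_def by (simp add: algebra_simps)
    qed
    finally show ?thesis
      by (simp add: center_scaleR_iff)
  qed
  have "ppow (ppow u 2) ?E = ppow u ?E * ppow u ?E"
    using pq ppow_add[of ?E ?E u] by (simp add: ppow_mult mult_2)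
  then show ?thesis
    using prime_alg_commute_if_commutators_central[OF prime commutator_central]
      commutator_central[of "ppow u 2" v] by simp
qed

lemma central_identity_nilpotent:
  fixes f :: "'a::real_algebra \<Rightarrow> 'a" and w :: 'a
  assumes mult: "\<And>x y. f (x * y) = f x * f y"
    and pq: "0 < p" "0 < q" and identity: "\<And>x y. central_identity f p q x y"
    and trivial_center: "\<And>c::'a. c \<in> center \<Longrightarrow> c = 0"
  shows "ppow w (2 * (p * q * (p + q))) = 0"
proof -
  let ?E = "p * q * (p + q)"
  have f_power: "f (ppow u ?E) = - (ppow u ?E + ppow u ?E)" for u
    using trivial_center[OF central_identity_diagonal[OF pq identity, of u]]
    by (simp only: eq_neg_iff_add_eq_0)
  let ?a = "ppow w ?E"
  have square: "ppow (ppow w 2) ?E = ?a * ?a" "ppow w (2 * ?E) = ?a * ?a"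
    using pq ppow_add[of ?E ?E w] by (simp_all add: ppow_mult mult_2)
  have "(?a + ?a) * (?a + ?a) = f (?a * ?a)"
    by (simp only: mult f_power minus_mult_minus)
  also have "\<dots> = - (?a * ?a + ?a * ?a)"
    using f_power[of "ppow w 2"] by (simp add: square)
  finally have f_square: "(?a + ?a) * (?a + ?a) = - (?a * ?a + ?a * ?a)" .
  have "6 *\<^sub>R (?a * ?a) = (?a + ?a) * (?a + ?a) + (?a * ?a + ?a * ?a)"
    by (simp add: algebra_simps flip: scaleR_2 scaleR_add_left)
  also have "\<dots> = 0"
    by (simp add: f_square)
  finally show ?thesis
    by (simp add: square)
qed

lemma prime_alg_commutative_if_central_identity:
  fixes f :: "'a::real_normed_algebra \<Rightarrow> 'a" and x y :: 'a
  assumes prime: "prime_alg TYPE('a)" and mult: "\<And>x y. f (x * y) = f x * f y"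
    and pq: "0 < p" "0 < q" and identity: "\<And>x y. central_identity f p q x y"
  shows "x * y = y * x"
proof -
  have "0 < p * q * (p + q)"
    using pq by simp
  then obtain m where m: "p * q * (p + q) = Suc m"
    using gr0_implies_Suc by blast
  show ?thesis
  proof (cases "\<exists>c\<in>center. c \<noteq> (0::'a)")
    case True
    then obtain c :: 'a where "c \<in> center" "c \<noteq> 0"
      by blast
    moreover have "ppow u (Suc m) * ppow v (Suc m) = ppow v (Suc m) * ppow u (Suc m)" for u v :: 'a
      using central_identity_powers_commute[OF prime mult pq identity, of u v] by (simp only: m)
    ultimately show ?thesis
      by (rule prime_alg_commutative_if_powers_commute[OF prime])
  next
    case False
    then have "ppow z (Suc (2 * m + 1)) = 0" for z :: 'a
      using central_identity_nilpotent[OF mult pq identity, of z] m by simp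
    then show ?thesis
      using prime_alg_nil_trivial[OF prime] by metis
  qed
qed

section \<open>Linear maps and polynomial curves\<close>

lemma additive_continuous_imp_linear:
  fixes f :: "'a::real_normed_vector \<Rightarrow> 'b::real_normed_vector"
  assumes add: "\<And>x y. f (x + y) = f x + f y" and cont: "continuous_on UNIV f"
  shows "linear f"
proof -
  interpret additive f
    by unfold_locales (rule add)
  have of_nat: "f (real n *\<^sub>R x) = real n *\<^sub>R f x" for n x
    using sum[of "\<lambda>_. x" "{..<n}"] by (simp add: sum_constant_scaleR)
  have of_int: "f (real_of_int k *\<^sub>R x) = real_of_int k *\<^sub>R f x" for k x
    by (cases k rule: int_cases2) (simp_all add: of_nat minus)
  have "f (s *\<^sub>R x) = s *\<^sub>R f x" if "s \<in> \<rat>" for s x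
  proof -
    obtain a b where b: "0 < b" and s: "s = of_int a / of_int b"
      using Rats_cases'[OF \<open>s \<in> \<rat>\<close>] by metis
    have "real_of_int b *\<^sub>R f (s *\<^sub>R x) = f (real_of_int a *\<^sub>R x)"
      using b by (simp add: s flip: of_int)
    moreover have "f (s *\<^sub>R x) = inverse (real_of_int b) *\<^sub>R (real_of_int b *\<^sub>R f (s *\<^sub>R x))"
      using b by simp
    ultimately show ?thesis
      by (simp add: s of_int divide_inverse mult.commute)
  qed
  then have "\<rat> \<subseteq> {s. f (s *\<^sub>R x) = s *\<^sub>R f x}" for x
    by blast
  moreover have "closed {s. f (s *\<^sub>R x) = s *\<^sub>R f x}" for x
    by (intro closed_Collect_eq continuous_on_compose2[OF cont]) (auto intro!: continuous_intros)
  ultimately have "f (s *\<^sub>R x) = s *\<^sub>R f x" for s x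
    using closure_minimal Rats_closure_real by blast
  then show ?thesis
    by (intro linearI) (simp_all add: add)
qed

definition polynomial_curve :: "(real \<Rightarrow> 'a::real_vector) \<Rightarrow> bool" where
  "polynomial_curve g \<longleftrightarrow> (\<exists>n c. \<forall>t. g t = (\<Sum>k<n. t ^ k *\<^sub>R c k))"

lemma polynomial_curve_monomial: "polynomial_curve (\<lambda>t. t ^ m *\<^sub>R a)"
  unfolding polynomial_curve_def
  by (rule exI[of _ "Suc m"], rule exI[of _ "\<lambda>k. if k = m then a else 0"]) (simp add: if_distrib)

lemma polynomial_curve_const: "polynomial_curve (\<lambda>t. a)"
  using polynomial_curve_monomial[of 0 a] by simp

lemma sum_powers_scaleR_extend:
  fixes c :: "nat \<Rightarrow> 'a::real_vector"
  assumes "n \<le> N"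
  shows "(\<Sum>k<N. t ^ k *\<^sub>R (if k < n then c k else 0)) = (\<Sum>k<n. t ^ k *\<^sub>R c k)"
proof -
  have "{k \<in> {..<N}. k < n} = {..<n}"
    using assms by auto
  then show ?thesis
    by (simp add: if_distrib sum.inter_filter[symmetric] cong: if_cong)
qed

lemma polynomial_curve_add:
  assumes "polynomial_curve g" "polynomial_curve h"
  shows "polynomial_curve (\<lambda>t. g t + h t)"
proof -
  obtain n a m b where g: "\<And>t. g t = (\<Sum>k<n. t ^ k *\<^sub>R a k)" and h: "\<And>t. h t = (\<Sum>k<m. t ^ k *\<^sub>R b k)"
    using assms unfolding polynomial_curve_def by metis
  have "g t + h t = (\<Sum>k<n + m. t ^ k *\<^sub>R ((if k < n then a k else 0) + (if k < m then b k else 0)))" for t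
    by (simp add: g h scaleR_add_right sum.distrib sum_powers_scaleR_extend del: scaleR_zero_right)
  then show ?thesis
    unfolding polynomial_curve_def by (intro exI allI)
qed

lemma polynomial_curve_mult:
  fixes g h :: "real \<Rightarrow> 'a::real_algebra"
  assumes "polynomial_curve g" "polynomial_curve h"
  shows "polynomial_curve (\<lambda>t. g t * h t)"
proof -
  obtain n a m b where g: "\<And>t. g t = (\<Sum>k<n. t ^ k *\<^sub>R a k)" and h: "\<And>t. h t = (\<Sum>k<m. t ^ k *\<^sub>R b k)"
    using assms unfolding polynomial_curve_def by metis
  have "g t * h t = (\<Sum>k<n + m. t ^ k *\<^sub>R (\<Sum>i<n. \<Sum>j<m. if i + j = k then a i * b j else 0))" for t
  proof -
    have "(\<Sum>k<n + m. t ^ k *\<^sub>R (\<Sum>i<n. \<Sum>j<m. if i + j = k then a i * b j else 0))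
        = (\<Sum>k<n + m. \<Sum>i<n. \<Sum>j<m. if k = i + j then t ^ (i + j) *\<^sub>R (a i * b j) else 0)"
      by (simp add: scaleR_sum_right if_distrib eq_commute cong: if_cong)
    also have "\<dots> = (\<Sum>i<n. \<Sum>j<m. \<Sum>k<n + m. if k = i + j then t ^ (i + j) *\<^sub>R (a i * b j) else 0)"
      by (subst sum.swap) (rule sum.cong[OF refl], rule sum.swap)
    also have "\<dots> = (\<Sum>i<n. \<Sum>j<m. t ^ (i + j) *\<^sub>R (a i * b j))"
      by (intro sum.cong refl) auto
    also have "\<dots> = g t * h t"
      by (simp add: g h sum_product power_add mult.commute)
    finally show ?thesis
      by simp
  qed
  then show ?thesis
    unfolding polynomial_curve_def by (intro exI allI)
qed

lemma polynomial_curve_line: "polynomial_curve (\<lambda>t. a + t *\<^sub>R d)"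
  using polynomial_curve_add[OF polynomial_curve_const polynomial_curve_monomial[of 1 d]] by simp

lemma polynomial_curve_linear:
  assumes "linear L" "polynomial_curve g"
  shows "polynomial_curve (\<lambda>t. L (g t))"
proof -
  obtain n c where "\<And>t. g t = (\<Sum>k<n. t ^ k *\<^sub>R c k)"
    using assms(2) unfolding polynomial_curve_def by metis
  then have "L (g t) = (\<Sum>k<n. t ^ k *\<^sub>R L (c k))" for t
    by (simp add: linear_sum[OF assms(1)] linear_scale[OF assms(1)])
  then show ?thesis
    unfolding polynomial_curve_def by (intro exI allI)
qed

lemma polynomial_curve_diff:
  assumes "polynomial_curve g" "polynomial_curve h"
  shows "polynomial_curve (\<lambda>t. g t - h t)"
  using polynomial_curve_add[OF assms(1) polynomial_curve_linear[OF linear_uminus assms(2)]] by simp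

lemma polynomial_curve_ppow:
  fixes g :: "real \<Rightarrow> 'a::real_algebra"
  assumes "polynomial_curve g"
  shows "polynomial_curve (\<lambda>t. ppow (g t) n)"
proof (induction n)
  case (Suc n)
  then show ?case
    using assms polynomial_curve_mult[OF assms Suc] by (cases "n = 0") (simp_all add: ppow_Suc)
qed (simp add: polynomial_curve_const)

lemma sum_powers_scaleR_eq_0_near_0:
  fixes c :: "nat \<Rightarrow> 'a::real_normed_vector"
  assumes "0 < \<delta>" "\<And>t. \<bar>t\<bar> < \<delta> \<Longrightarrow> (\<Sum>k<n. t ^ k *\<^sub>R c k) = 0"
  shows "k < n \<Longrightarrow> c k = 0"
  using assms(2)
proof (induction n arbitrary: c k)
  case (Suc n)
  let ?S = "\<lambda>t::real. \<Sum>k<n. t ^ k *\<^sub>R c (Suc k)"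
  have split: "(\<Sum>k<Suc n. t ^ k *\<^sub>R c k) = c 0 + t *\<^sub>R ?S t" for t
    by (subst sum.lessThan_Suc_shift) (simp add: scaleR_sum_right del: sum.lessThan_Suc)
  have c0: "c 0 = 0"
    using Suc.prems(2)[of 0] assms(1) split[of 0] by simp
  have S_near_0: "?S t = 0" if "t \<noteq> 0" "\<bar>t\<bar> < \<delta>" for t
  proof -
    have "c 0 + t *\<^sub>R ?S t = 0"
      using Suc.prems(2)[OF that(2)] unfolding split .
    then show ?thesis
      using that(1) by (simp add: c0)
  qed
  have "(?S \<longlongrightarrow> ?S 0) (at 0)"
    by (intro tendsto_intros)
  moreover have "eventually (\<lambda>t. ?S t = 0) (at 0)"
    unfolding eventually_at using assms(1) S_near_0 by (auto simp: dist_real_def)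
  then have "(?S \<longlongrightarrow> 0) (at 0)"
    by (rule tendsto_eventually)
  ultimately have "?S 0 = 0"
    by (rule tendsto_unique[rotated]) simp
  then have "?S t = 0" if "\<bar>t\<bar> < \<delta>" for t
    using S_near_0[OF _ that] by (cases "t = 0") simp_all
  then have "c (Suc j) = 0" if "j < n" for j
    using Suc.IH[where c = "\<lambda>k. c (Suc k)" and k = j] that by blast
  then show ?case
    using c0 \<open>k < Suc n\<close> by (cases k) simp_all
qed simp

lemma polynomial_curve_eq_0_near_0:
  fixes g :: "real \<Rightarrow> 'a::real_normed_vector"
  assumes "polynomial_curve g" "0 < \<delta>" "\<And>t. \<bar>t\<bar> < \<delta> \<Longrightarrow> g t = 0"
  shows "g s = 0"
proof -
  obtain n c where g: "\<And>t. g t = (\<Sum>k<n. t ^ k *\<^sub>R c k)"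
    using assms(1) unfolding polynomial_curve_def by metis
  have "c k = 0" if "k < n" for k
    by (rule sum_powers_scaleR_eq_0_near_0[OF assms(2) _ that]) (simp add: assms(3) flip: g)
  then show ?thesis
    by (simp add: g)
qed

lemma polynomial_on_lines_eq_0_on_ball:
  fixes \<Psi> :: "'a::real_normed_vector \<Rightarrow> 'b::real_normed_vector"
  assumes poly: "\<And>x d. polynomial_curve (\<lambda>t. \<Psi> (x + t *\<^sub>R d))"
    and "0 < r" and ball: "\<And>x. x \<in> ball x0 r \<Longrightarrow> \<Psi> x = 0"
  shows "\<Psi> x = 0"
proof -
  define \<delta> where "\<delta> = r / (norm (x - x0) + 1)"
  have "0 < \<delta>"
    using \<open>0 < r\<close> by (simp add: \<delta>_def add_nonneg_pos)
  moreover have "\<Psi> (x0 + t *\<^sub>R (x - x0)) = 0" if "\<bar>t\<bar> < \<delta>" for t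
  proof (rule ball)
    have "\<bar>t\<bar> * norm (x - x0) \<le> \<bar>t\<bar> * (norm (x - x0) + 1)"
      by (simp add: mult_left_mono)
    also have "\<dots> < r"
      using that pos_less_divide_eq[of "norm (x - x0) + 1"] by (simp add: \<delta>_def add_nonneg_pos)
    finally show "x0 + t *\<^sub>R (x - x0) \<in> ball x0 r"
      by (simp add: dist_norm)
  qed
  ultimately have "\<Psi> (x0 + 1 *\<^sub>R (x - x0)) = 0"
    by (rule polynomial_curve_eq_0_near_0[OF poly])
  then show ?thesis
    by simp
qed

lemma polynomial_curve_central_identity_term:
  fixes f :: "'a::real_algebra \<Rightarrow> 'a"
  assumes "linear f" "polynomial_curve g" "polynomial_curve h"
  shows "polynomial_curve (\<lambda>t. f (ppow (g t) p * ppow (h t) q) + jordan (ppow (g t) p) (ppow (h t) q))"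
proof -
  have powers: "polynomial_curve (\<lambda>t. ppow (g t) p)" "polynomial_curve (\<lambda>t. ppow (h t) q)"
    using assms(2,3) by (simp_all add: polynomial_curve_ppow)
  then have "polynomial_curve (\<lambda>t. ppow (g t) p * ppow (h t) q)"
    by (rule polynomial_curve_mult)
  with powers show ?thesis
    unfolding jordan_def
    by (intro polynomial_curve_add polynomial_curve_linear[OF assms(1)] polynomial_curve_mult)
qed

lemma central_identity_everywhere:
  fixes f :: "'a::real_normed_algebra \<Rightarrow> 'a"
  assumes "linear f" "0 < r"
    and ball: "\<And>z. z \<in> ball z0 r \<Longrightarrow> central_identity f p q (fst z) (snd z)"
  shows "central_identity f p q x y"
proof -
  define \<Phi> where "\<Phi> z = f (ppow (fst z) p * ppow (snd z) q) + jordan (ppow (fst z) p) (ppow (snd z) q)"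
    for z :: "'a \<times> 'a"
  have "\<Phi> z * w - w * \<Phi> z = 0" for z w
  proof (rule polynomial_on_lines_eq_0_on_ball[where \<Psi> = "\<lambda>z. \<Phi> z * w - w * \<Phi> z", OF _ \<open>0 < r\<close>])
    fix a d :: "'a \<times> 'a"
    have "polynomial_curve (\<lambda>t. fst (a + t *\<^sub>R d))" "polynomial_curve (\<lambda>t. snd (a + t *\<^sub>R d))"
      by (simp_all add: polynomial_curve_line)
    then have "polynomial_curve (\<lambda>t. \<Phi> (a + t *\<^sub>R d))"
      unfolding \<Phi>_def by (rule polynomial_curve_central_identity_term[OF \<open>linear f\<close>])
    then show "polynomial_curve (\<lambda>t. \<Phi> (a + t *\<^sub>R d) * w - w * \<Phi> (a + t *\<^sub>R d))"
      by (intro polynomial_curve_diff polynomial_curve_mult polynomial_curve_const)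
    show "\<Phi> a * w - w * \<Phi> a = 0" if "a \<in> ball z0 r" for a
      using ball[OF that] unfolding \<Phi>_def central_identity_def center_iff by simp
  qed
  then have "\<Phi> (x, y) \<in> center"
    by (simp add: center_iff)
  then show ?thesis
    by (simp add: \<Phi>_def central_identity_def)
qed

section \<open>Baire category\<close>

lemma closed_center: "closed (center :: 'a::real_normed_algebra set)"
proof -
  have center_eq: "center = (\<Inter>w. {z::'a. z * w = w * z})"
    by (auto simp: center_def)
  show ?thesis
    unfolding center_eq by (intro closed_INT ballI closed_Collect_eq continuous_intros)
qed

lemma closed_central_identity:
  fixes f :: "'a::real_normed_algebra \<Rightarrow> 'a"
  assumes "continuous_on UNIV f"
  shows "closed {z. central_identity f p q (fst z) (snd z)}"
proof -
  let ?\<Phi> = "\<lambda>z. f (ppow (fst z) p * ppow (snd z) q) + jordan (ppow (fst z) p) (ppow (snd z) q)"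
  have "continuous_on UNIV (\<lambda>z. f (ppow (fst z) p * ppow (snd z) q))"
    by (rule continuous_on_compose2[OF assms]) (auto intro!: continuous_intros)
  then have "continuous_on UNIV ?\<Phi>"
    unfolding jordan_def by (intro continuous_intros)
  then have "closed (?\<Phi> -` center)"
    using continuous_on_closed_vimage[of UNIV ?\<Phi>] closed_center by auto
  then show ?thesis
    by (simp add: central_identity_def vimage_def)
qed

lemma Baire_closed_cover_interior:
  fixes U :: "'a::complete_space set"
  assumes "open U" "U \<noteq> {}" "countable \<C>" "\<And>C. C \<in> \<C> \<Longrightarrow> closed C" "U \<subseteq> \<Union>\<C>"
  shows "\<exists>C\<in>\<C>. interior C \<noteq> {}"
proof -
  let ?X = "top_of_set U"
  have "\<exists>C\<in>\<C>. ?X interior_of (U \<inter> C) \<noteq> {}"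
  proof (rule ccontr)
    assume "\<not> ?thesis"
    then have "?X interior_of \<Union>((\<lambda>C. U \<inter> C) ` \<C>) = {}"
      using assms(1,3,4) completely_metrizable_space_openin[OF completely_metrizable_space_euclidean]
      by (intro Baire_category_alt) (auto intro: closedin_closed_Int)
    moreover have "\<Union>((\<lambda>C. U \<inter> C) ` \<C>) = U"
      using assms(5) by blast
    ultimately show False
      using assms(2) interior_of_topspace[of ?X] by simp
  qed
  then obtain C where "C \<in> \<C>" and ne: "?X interior_of (U \<inter> C) \<noteq> {}"
    by blast
  have "open (?X interior_of (U \<inter> C))"
    using openin_interior_of openin_open_trans assms(1) by blast
  then have "?X interior_of (U \<inter> C) \<subseteq> interior C"
    by (meson interior_maximal interior_of_subset le_infE)
  with \<open>C \<in> \<C>\<close> ne show ?thesis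
    by blast
qed

lemma ex_ball_central_identity:
  fixes f :: "'a::{real_normed_algebra, banach} \<Rightarrow> 'a"
  assumes "open H1" "H1 \<noteq> {}" "open H2" "H2 \<noteq> {}" "continuous_on UNIV f"
    and "\<forall>x\<in>H1. \<forall>y\<in>H2. \<exists>p q::nat. p > 0 \<and> q > 0 \<and>
           f (ppow x p * ppow y q) + jordan (ppow x p) (ppow y q) \<in> center"
  shows "\<exists>p q z0 r. 0 < p \<and> 0 < q \<and> 0 < r \<and> (\<forall>z\<in>ball z0 r. central_identity f p q (fst z) (snd z))"
proof -
  let ?C = "\<lambda>(p, q). {z. central_identity f p q (fst z) (snd z)}"
  have "\<exists>C\<in>?C ` ({0<..} \<times> {0<..}). interior C \<noteq> {}"
  proof (rule Baire_closed_cover_interior)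
    show "open (H1 \<times> H2)" "H1 \<times> H2 \<noteq> {}"
      using assms(1-4) by (simp_all add: open_Times)
    show "H1 \<times> H2 \<subseteq> \<Union>(?C ` ({0<..} \<times> {0<..}))"
    proof
      fix z assume "z \<in> H1 \<times> H2"
      then obtain p q where "0 < p" "0 < q" "central_identity f p q (fst z) (snd z)"
        using assms(6) unfolding central_identity_def by (metis mem_Times_iff)
      then show "z \<in> \<Union>(?C ` ({0<..} \<times> {0<..}))"
        by blast
    qed
    show "countable (?C ` ({0<..} \<times> {0<..}))"
      by (intro countable_image countableI_type)
    show "closed C" if "C \<in> ?C ` ({0<..} \<times> {0<..})" for C
      using that closed_central_identity[OF assms(5)] by auto
  qed
  then obtain p q z where "0 < p" "0 < q" "z \<in> interior (?C (p, q))"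
    by blast
  moreover from this(3) obtain r where "0 < r" "ball z r \<subseteq> ?C (p, q)"
    by (meson mem_interior)
  ultimately show ?thesis
    by blast
qed

theorem theorem2p2:
  fixes f :: "'a::{real_normed_algebra, banach} \<Rightarrow> 'a"
    and H1 H2 :: "'a set"
  assumes "prime_alg TYPE('a)"
    and "open H1" and "H1 \<noteq> {}"
    and "open H2" and "H2 \<noteq> {}"
    and "automorphism f"
    and "continuous_on UNIV f"
    and "\<forall>x\<in>H1. \<forall>y\<in>H2. \<exists>p q::nat. p > 0 \<and> q > 0 \<and>
           f (ppow x p * ppow y q) + jordan (ppow x p) (ppow y q) \<in> center"
  shows "\<forall>x y::'a. x * y = y * x"
proof -
  have add: "\<And>x y. f (x + y) = f x + f y" and mult: "\<And>x y. f (x * y) = f x * f y"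
    using assms(6) by (simp_all add: automorphism_def)
  have "linear f"
    using additive_continuous_imp_linear[OF add assms(7)] .
  obtain p q z0 r where pq: "0 < p" "0 < q" and "0 < r"
    and "\<forall>z\<in>ball z0 r. central_identity f p q (fst z) (snd z)"
    using ex_ball_central_identity[OF assms(2-5,7,8)] by blast
  then have "central_identity f p q x y" for x y
    using central_identity_everywhere[OF \<open>linear f\<close> \<open>0 < r\<close>] by blast
  then show ?thesis
    using prime_alg_commutative_if_central_identity[OF assms(1) mult pq] by blast
qed

end
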